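(* Let $n\ge 1$, $m\ge1$ and $W=A_{n-1}$. Then $$\sum_{R}q^{\operatorname{coh}(R)}=\sum_{D\in\mathcal{D}^{(m)}_n}q^{\operatorname{area}(D)},$$ where $R$ ranges over the positive regions of the extended Shi arrangement $\mathsf{Shi}^{(m)}(A_{n-1})$.
   Context: For a crystallographic reflection group $W$ acting on a real Euclidean space $V$ with root system $\Phi$ and positive roots $\Phi^+$ ($N=|\Phi^+|$), the extended Shi arrangement $\mathsf{Shi}^{(m)}(W)$ consists of the hyperplanes $H^{(k)}_\alpha=\{x:(\alpha,x)=k\}$ for $\alpha\in\Phi^+$, $-m<k\le m$. A region is a connected component of the complement of these hyperplanes; it is positive if it lies in the fundamental chamber $\{x:(\alpha,x)>0\ \forall\alpha\in\Phi^+\}$. Let $R^0=\{x:0<(\alpha,x)<1\ \forall\alpha\in\Phi^+\}$; the height of a region $R$ is the number of hyperplanes of $\mathsf{Shi}^{(m)}(W)$ separating $R$ from $R^0$, and $\operatorname{coh}(R)=mN-\operatorname{height}(R)$. For $A_{n-1}$, $\Phi^+=\{e_j-e_i:1\le i<j\le n\}$ in $\{x\in\mathbb{R}^n:\sum x_i=0\}$. $\mathcal{D}^{(m)}_n$ is the set of $m$-Dyck paths of semilength $n$: north-east lattice paths from $(0,0)$ to $(mn,n)$ (unit north and east steps) staying weakly above the line $x=my$; $\operatorname{area}(D)$ is the number of full unit lattice squares lying between $D$ and the line $x=my$. *)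

theory Defs
  imports "HOL-Analysis.Analysis"
begin

text \<open>Type A_{n-1}: the ambient space V = {x in R^n : sum x_i = 0}, with coordinates
  indexed by 0..n-1 and realised inside nat => real (product topology; coordinates
  >= n are zero).  Positive roots e_j - e_i (i < j < n), so (alpha, x) = x j - x i.\<close>

definition V_A :: "nat \<Rightarrow> (nat \<Rightarrow> real) set" where
  "V_A n = {x. (\<forall>i\<ge>n. x i = 0) \<and> (\<Sum>i<n. x i) = 0}"

text \<open>Hyperplanes H^{(k)}_{e_j - e_i} of Shi^{(m)}(A_{n-1}): triples (i,j,k), i<j<n, -m<k<=m.\<close>
definition shi_hyps :: "nat \<Rightarrow> nat \<Rightarrow> (nat \<times> nat \<times> int) set" where
  "shi_hyps n m = {(i, j, k). i < j \<and> j < n \<and> - int m < k \<and> k \<le> int m}"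

definition shi_complement :: "nat \<Rightarrow> nat \<Rightarrow> (nat \<Rightarrow> real) set" where
  "shi_complement n m = {x \<in> V_A n. \<forall>(i, j, k) \<in> shi_hyps n m. x j - x i \<noteq> of_int k}"

definition shi_regions :: "nat \<Rightarrow> nat \<Rightarrow> (nat \<Rightarrow> real) set set" where
  "shi_regions n m = {connected_component_set (shi_complement n m) x | x. x \<in> shi_complement n m}"

definition fund_chamber :: "nat \<Rightarrow> (nat \<Rightarrow> real) set" where
  "fund_chamber n = {x \<in> V_A n. \<forall>i j. i < j \<and> j < n \<longrightarrow> 0 < x j - x i}"

definition R0_A :: "nat \<Rightarrow> (nat \<Rightarrow> real) set" where
  "R0_A n = {x \<in> V_A n. \<forall>i j. i < j \<and> j < n \<longrightarrow> 0 < x j - x i \<and> x j - x i < 1}"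

definition separates :: "nat \<times> nat \<times> int \<Rightarrow> (nat \<Rightarrow> real) set \<Rightarrow> (nat \<Rightarrow> real) set \<Rightarrow> bool" where
  "separates h A B = (case h of (i, j, k) \<Rightarrow>
     \<exists>x\<in>A. \<exists>y\<in>B. (x j - x i < of_int k \<and> of_int k < y j - y i) \<or>
                  (y j - y i < of_int k \<and> of_int k < x j - x i))"

definition shi_height :: "nat \<Rightarrow> nat \<Rightarrow> (nat \<Rightarrow> real) set \<Rightarrow> nat" where
  "shi_height n m R = card {h \<in> shi_hyps n m. separates h R (R0_A n)}"

definition num_pos_roots_A :: "nat \<Rightarrow> nat" where
  "num_pos_roots_A n = card {(i, j). i < j \<and> j < (n::nat)}"

definition shi_coh :: "nat \<Rightarrow> nat \<Rightarrow> (nat \<Rightarrow> real) set \<Rightarrow> nat" where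
  "shi_coh n m R = m * num_pos_roots_A n - shi_height n m R"

text \<open>m-Dyck paths: lists of steps, True = north (0,1), False = east (1,0),
  from (0,0) to (mn,n), every prefix satisfies #east <= m * #north (weakly above x = m y).\<close>
definition n_north :: "bool list \<Rightarrow> nat" where
  "n_north D = length (filter id D)"

definition n_east :: "bool list \<Rightarrow> nat" where
  "n_east D = length (filter Not D)"

definition dyck_paths :: "nat \<Rightarrow> nat \<Rightarrow> bool list set" where
  "dyck_paths m n = {D. n_north D = n \<and> n_east D = m * n \<and>
      (\<forall>i\<le>length D. n_east (take i D) \<le> m * n_north (take i D))}"

text \<open>x-coordinate of the path within row y (the strip y <= height <= y+1):
  the number of east steps taken at heights <= y.\<close>
definition path_x :: "bool list \<Rightarrow> nat \<Rightarrow> nat" where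
  "path_x D y = card {i. i < length D \<and> \<not> D ! i \<and> n_north (take i D) \<le> y}"

text \<open>Area: number of unit squares [a,a+1] x [y,y+1] lying between the path (to its right)
  and the line x = m y (to its left), i.e. path_x D y <= a and a + 1 <= m y.\<close>
definition dyck_area :: "nat \<Rightarrow> nat \<Rightarrow> bool list \<Rightarrow> nat" where
  "dyck_area m n D = card {(a, y). y < n \<and> path_x D y \<le> a \<and> a + 1 \<le> m * y}"

end

theory Submission
  imports Defs
begin

text \<open>
  The positive regions of Shi^(m)(A_{n-1}) are counted by area via a bijection with
  m-Dyck paths, both sides being encoded by the same sequences e_0, ..., e_(n-1) with
  e weakly increasing and e_y <= m y ("admissible sequences").

  Dyck side: a Dyck path is determined by the abscissae of its rows, which form an
  admissible sequence, and its area is the sum of the m y - e_y.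

  Region side: for a point x of the fundamental chamber off the arrangement, let e_j count
  the pairs (i, l), i < j, 1 <= l <= m, with x_i + l < x_j.  Its region is determined by
  which inequalities x_i + l < x_j hold (regions are convex in the chamber); these are in
  turn recovered from e by ranking the shifted values x_i + l index by index; and every
  admissible e arises by placing the coordinates one after the other.  The hyperplanes
  separating the region from R^0 are exactly the (i, j, l) with x_i + l < x_j, so the height
  is the sum of the e_j and the coheight is the sum of the m j - e_j, matching the area.
\<close>

subsection \<open>Dyck paths as bounded weakly increasing sequences\<close>

lemma n_north_Nil [simp]: "n_north [] = 0"
  and n_east_Nil [simp]: "n_east [] = 0"
  and n_north_Cons [simp]: "n_north (a # D) = (if a then Suc (n_north D) else n_north D)"
  and n_east_Cons [simp]: "n_east (a # D) = (if a then n_east D else Suc (n_east D))"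
  and n_north_append [simp]: "n_north (D @ D') = n_north D + n_north D'"
  and n_east_append [simp]: "n_east (D @ D') = n_east D + n_east D'"
  and n_north_replicate_east [simp]: "n_north (replicate r False) = 0"
  and n_east_replicate_east [simp]: "n_east (replicate r False) = r"
  by (simp_all add: n_north_def n_east_def)

lemma length_eq_north_plus_east: "length D = n_north D + n_east D"
  by (induction D) auto

lemma n_north_take_le: "n_north (take i D) \<le> n_north D"
  and n_east_take_le: "n_east (take i D) \<le> n_east D"
  by (metis append_take_drop_id n_north_append n_east_append le_add1)+

text \<open>row_x D y is the number of east steps of D before its (y+1)-st north step, i.e. the
  abscissa at which D leaves row y.\<close>

fun row_x :: "bool list \<Rightarrow> nat \<Rightarrow> nat" where
  "row_x [] y = 0"
| "row_x (True # D) y = (if y = 0 then 0 else row_x D (y - 1))"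
| "row_x (False # D) y = Suc (row_x D y)"

lemma card_less_Suc_split:
  "card {i. i < Suc k \<and> Q i} = (if Q 0 then 1 else 0) + card {i. i < k \<and> Q (Suc i)}"
proof -
  have split: "{i. i < Suc k \<and> Q i} = (if Q 0 then {0} else {}) \<union> Suc ` {i. i < k \<and> Q (Suc i)}"
    by (auto simp: less_Suc_eq_0_disj image_iff)
  have "card ((if Q 0 then {0} else {}) \<union> Suc ` {i. i < k \<and> Q (Suc i)})
      = card (if Q 0 then {0::nat} else {}) + card (Suc ` {i. i < k \<and> Q (Suc i)})"
    by (rule card_Un_disjoint) auto
  then show ?thesis
    by (simp add: split card_image)
qed

lemma path_x_eq_row_x: "path_x D y = row_x D y"
proof (induction D arbitrary: y)
  case Nil
  then show ?case by (simp add: path_x_def)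
next
  case (Cons a D)
  have first_step: "path_x (a # D) y = (if a then 0 else 1) +
     card {i. i < length D \<and> \<not> D ! i \<and> n_north (take (Suc i) (a # D)) \<le> y}"
    unfolding path_x_def
    using card_less_Suc_split[of "length D" "\<lambda>i. \<not> (a # D) ! i \<and> n_north (take i (a # D)) \<le> y"]
    by simp
  show ?case
  proof (cases a)
    case True
    then show ?thesis
      using first_step Cons.IH[of "y - 1"] by (cases y) (simp_all add: path_x_def)
  next
    case False
    then show ?thesis
      using first_step Cons.IH[of y] by (simp add: path_x_def)
  qed
qed

lemma row_x_mono: "row_x D y \<le> row_x D (Suc y)"
proof (induction D arbitrary: y)
  case (Cons a D)
  then show ?case by (cases a; cases y) simp_all
qed simp

lemma row_entered:
  "y < n_north D \<Longrightarrow> \<exists>i \<le> length D. n_north (take i D) = y \<and> n_east (take i D) = row_x D y"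
proof (induction D arbitrary: y)
  case (Cons a D)
  show ?case
  proof (cases "a \<and> y = 0")
    case True
    then show ?thesis by (intro exI[of _ 0]) simp
  next
    case False
    then have "(if a then y - 1 else y) < n_north D"
      using Cons.prems by (cases a) auto
    then obtain i where "i \<le> length D" "n_north (take i D) = (if a then y - 1 else y)"
        "n_east (take i D) = row_x D (if a then y - 1 else y)"
      using Cons.IH by blast
    then show ?thesis
      using False by (intro exI[of _ "Suc i"]) auto
  qed
qed simp

lemma prefix_left_of_row:
  "n_north (take i D) < n_north D \<Longrightarrow> n_east (take i D) \<le> row_x D (n_north (take i D))"
proof (induction D arbitrary: i)
  case (Cons a D)
  then show ?case by (cases i; cases a) auto
qed simp

text \<open>The Dyck condition only needs to be checked at the points where rows are entered.\<close>

lemma dyck_paths_iff: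
  "D \<in> dyck_paths m n \<longleftrightarrow> n_north D = n \<and> n_east D = m * n \<and> (\<forall>y<n. row_x D y \<le> m * y)"
proof
  assume "D \<in> dyck_paths m n"
  then have D: "n_north D = n" "n_east D = m * n"
    "\<And>i. i \<le> length D \<Longrightarrow> n_east (take i D) \<le> m * n_north (take i D)"
    unfolding dyck_paths_def by auto
  have "row_x D y \<le> m * y" if "y < n" for y
    using row_entered[of y D] D that by force
  with D show "n_north D = n \<and> n_east D = m * n \<and> (\<forall>y<n. row_x D y \<le> m * y)"
    by blast
next
  assume D: "n_north D = n \<and> n_east D = m * n \<and> (\<forall>y<n. row_x D y \<le> m * y)"
  have "n_east (take i D) \<le> m * n_north (take i D)" for i
  proof (cases "n_north (take i D) < n")
    case True
    then show ?thesis using prefix_left_of_row[of i D] D by force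
  next
    case False
    then have "n_north (take i D) = n"
      using n_north_take_le[of i D] D by simp
    then show ?thesis using n_east_take_le[of i D] D by simp
  qed
  then show "D \<in> dyck_paths m n"
    using D unfolding dyck_paths_def by auto
qed

lemma row_x_inj:
  "n_north D1 = k \<Longrightarrow> n_north D2 = k \<Longrightarrow> n_east D1 = n_east D2 \<Longrightarrow>
   (\<forall>y<k. row_x D1 y = row_x D2 y) \<Longrightarrow> D1 = D2"
proof (induction D1 arbitrary: D2 k)
  case Nil
  then show ?case using length_eq_north_plus_east[of D2] by simp
next
  case (Cons a D1)
  then obtain b D2' where D2: "D2 = b # D2'"
    by (cases D2) (auto split: if_splits)
  have "a = b"
    using Cons.prems(1,2) Cons.prems(4)[rule_format, of 0] D2 by (cases a; cases b) auto
  moreover have "D1 = D2'"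
  proof (cases a)
    case True
    have "row_x D1 y = row_x D2' y" if "y < k - 1" for y
      using Cons.prems(4)[rule_format, of "Suc y"] that True \<open>a = b\<close> D2 by simp
    then show ?thesis
      using Cons.IH[of "k - 1" D2'] Cons.prems True \<open>a = b\<close> D2 by simp
  next
    case False
    then show ?thesis
      using Cons.IH[of k D2'] Cons.prems \<open>a = b\<close> D2 by simp
  qed
  ultimately show ?case using D2 by simp
qed

fun path_of_rows :: "nat \<Rightarrow> (nat \<Rightarrow> nat) \<Rightarrow> nat \<Rightarrow> bool list" where
  "path_of_rows 0 e tot = replicate tot False"
| "path_of_rows (Suc k) e tot =
     replicate (e 0) False @ True # path_of_rows k (\<lambda>y. e (Suc y) - e 0) (tot - e 0)"

lemma row_x_replicate_east: "row_x (replicate a False @ D) y = a + row_x D y"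
  by (induction a) auto

lemma path_of_rows_props:
  assumes "\<forall>y. Suc y < k \<longrightarrow> e y \<le> e (Suc y)" and "\<forall>y<k. e y \<le> tot"
  shows "n_north (path_of_rows k e tot) = k \<and> n_east (path_of_rows k e tot) = tot \<and>
    (\<forall>y<k. row_x (path_of_rows k e tot) y = e y)"
  using assms
proof (induction k arbitrary: e tot)
  case (Suc k)
  let ?e = "\<lambda>y. e (Suc y) - e 0"
  have e0_least: "e 0 \<le> e z" if "z < Suc k" for z
    using lift_Suc_mono_le_ivl[of "{..<k}" e 0 z] Suc.prems(1) that
    by (simp add: subset_eq)
  have "\<forall>y. Suc y < k \<longrightarrow> ?e y \<le> ?e (Suc y)" "\<forall>y<k. ?e y \<le> tot - e 0"
    using Suc.prems by (auto intro: diff_le_mono)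
  note IH = Suc.IH[OF this]
  have "row_x (path_of_rows (Suc k) e tot) y = e y" if "y < Suc k" for y
    using IH that e0_least[of y] by (cases y) (simp_all add: row_x_replicate_east)
  then show ?case using IH Suc.prems(2) by auto
qed simp

definition admissible_seqs :: "nat \<Rightarrow> nat \<Rightarrow> (nat \<Rightarrow> nat) set" where
  "admissible_seqs n m = {e. (\<forall>y. n \<le> y \<longrightarrow> e y = 0) \<and> (\<forall>y<n. e y \<le> m * y) \<and>
      (\<forall>y. Suc y < n \<longrightarrow> e y \<le> e (Suc y))}"

definition seq_area :: "nat \<Rightarrow> nat \<Rightarrow> (nat \<Rightarrow> nat) \<Rightarrow> nat" where
  "seq_area n m e = (\<Sum>y<n. m * y - e y)"

definition rows_of :: "nat \<Rightarrow> bool list \<Rightarrow> nat \<Rightarrow> nat" where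
  "rows_of n D y = (if y < n then row_x D y else 0)"

lemma rows_of_bij: "bij_betw (rows_of n) (dyck_paths m n) (admissible_seqs n m)"
proof -
  have "inj_on (rows_of n) (dyck_paths m n)"
  proof (rule inj_onI)
    fix D1 D2 assume D: "D1 \<in> dyck_paths m n" "D2 \<in> dyck_paths m n" "rows_of n D1 = rows_of n D2"
    have "row_x D1 y = row_x D2 y" if "y < n" for y
      using fun_cong[OF D(3), of y] that unfolding rows_of_def by simp
    then show "D1 = D2" using row_x_inj[of D1 n D2] D(1,2) dyck_paths_iff by auto
  qed
  moreover have "rows_of n ` dyck_paths m n \<subseteq> admissible_seqs n m"
    using dyck_paths_iff row_x_mono unfolding admissible_seqs_def rows_of_def by auto
  moreover have "e \<in> rows_of n ` dyck_paths m n" if e: "e \<in> admissible_seqs n m" for e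
  proof -
    have "\<forall>y. Suc y < n \<longrightarrow> e y \<le> e (Suc y)" "\<forall>y<n. e y \<le> m * n"
      using e unfolding admissible_seqs_def by (auto intro: le_trans[OF _ mult_le_mono2])
    note P = path_of_rows_props[OF this]
    have "path_of_rows n e (m * n) \<in> dyck_paths m n" "rows_of n (path_of_rows n e (m * n)) = e"
      using P e unfolding dyck_paths_iff admissible_seqs_def rows_of_def by auto
    then show ?thesis by force
  qed
  ultimately show ?thesis unfolding bij_betw_def by blast
qed

text \<open>Row y contributes the m y - e_y squares between the path and the line x = m y.\<close>

lemma dyck_area_eq_seq_area: "dyck_area m n D = seq_area n m (rows_of n D)"
proof -
  have "{(a, y). y < n \<and> path_x D y \<le> a \<and> a + 1 \<le> m * y} =
        (\<lambda>(y, a). (a, y)) ` (SIGMA y:{..<n}. {row_x D y..<m * y})"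
    by (auto simp: path_x_eq_row_x image_iff)
  moreover have "card ((\<lambda>(y, a). (a, y)) ` (SIGMA y:{..<n}. {row_x D y..<m * y})) =
      card (SIGMA y:{..<n}. {row_x D y..<m * y})"
    by (rule card_image) (auto simp: inj_on_def)
  ultimately show ?thesis
    unfolding dyck_area_def seq_area_def rows_of_def by simp
qed

lemma dyck_sum_eq_seq_sum:
  "(\<Sum>D \<in> dyck_paths m n. q ^ dyck_area m n D) = (\<Sum>e \<in> admissible_seqs n m. q ^ seq_area n m e)"
  using sum.reindex_bij_betw[OF rows_of_bij[of n m], of "\<lambda>e. q ^ seq_area n m e"]
  by (simp add: dyck_area_eq_seq_area)

subsection \<open>Positive regions are classified by shift patterns\<close>

abbreviation region_of :: "nat \<Rightarrow> nat \<Rightarrow> (nat \<Rightarrow> real) \<Rightarrow> (nat \<Rightarrow> real) set" where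
  "region_of n m x \<equiv> connected_component_set (shi_complement n m) x"

definition pos_points :: "nat \<Rightarrow> nat \<Rightarrow> (nat \<Rightarrow> real) set" where
  "pos_points n m = shi_complement n m \<inter> fund_chamber n"

definition same_shifts :: "nat \<Rightarrow> nat \<Rightarrow> (nat \<Rightarrow> real) \<Rightarrow> (nat \<Rightarrow> real) \<Rightarrow> bool" where
  "same_shifts n m x y \<longleftrightarrow> (\<forall>a b l. a < b \<and> b < n \<and> 1 \<le> l \<and> l \<le> m \<longrightarrow>
      (x a + real l < x b \<longleftrightarrow> y a + real l < y b))"

lemma same_shiftsD:
  "same_shifts n m x y \<Longrightarrow> a < b \<Longrightarrow> b < n \<Longrightarrow> 1 \<le> l \<Longrightarrow> l \<le> m \<Longrightarrow>
   x a + real l < x b \<longleftrightarrow> y a + real l < y b"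
  unfolding same_shifts_def by blast

lemma complement_avoids:
  "x \<in> shi_complement n m \<Longrightarrow> i < j \<Longrightarrow> j < n \<Longrightarrow> - int m < k \<Longrightarrow> k \<le> int m \<Longrightarrow>
   x j - x i \<noteq> of_int k"
  unfolding shi_complement_def shi_hyps_def by auto

lemma pos_points_increasing: "x \<in> pos_points n m \<Longrightarrow> i < j \<Longrightarrow> j < n \<Longrightarrow> x i < x j"
  unfolding pos_points_def fund_chamber_def by auto

lemma side_constant_on_connected:
  fixes C :: "(nat \<Rightarrow> real) set"
  assumes "connected C" "x \<in> C" "y \<in> C" and avoid: "\<forall>z\<in>C. z j - z i \<noteq> c"
  shows "x j - x i < c \<longleftrightarrow> y j - y i < c"
proof -
  let ?f = "\<lambda>z::nat \<Rightarrow> real. z j - z i"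
  have "continuous_on C ?f"
    by (rule continuous_on_subset[of UNIV])
       (auto intro!: continuous_intros continuous_on_product_coordinates)
  then have "connected (?f ` C)"
    using assms(1) by (rule connected_continuous_image)
  then have between: "z \<in> ?f ` C" if "u \<in> ?f ` C" "v \<in> ?f ` C" "u \<le> z" "z \<le> v" for u v z
    using that unfolding connected_iff_interval by blast
  have image: "?f x \<in> ?f ` C" "?f y \<in> ?f ` C" "c \<notin> ?f ` C"
    using assms by auto
  have "\<not> (?f x < c \<and> c < ?f y)" "\<not> (?f y < c \<and> c < ?f x)"
    using between[OF image(1,2), of c] between[OF image(2,1), of c] image(3) by auto
  moreover have "?f x \<noteq> c" "?f y \<noteq> c"
    using assms by auto
  ultimately show ?thesis by linarith
qed

lemma region_side:
  assumes "x \<in> shi_complement n m" "y \<in> region_of n m x"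
    and "i < j" "j < n" "- int m < k" "k \<le> int m"
  shows "x j - x i < of_int k \<longleftrightarrow> y j - y i < of_int k"
proof (rule side_constant_on_connected)
  show "x \<in> region_of n m x"
    using assms(1) by simp
  show "\<forall>z\<in>region_of n m x. z j - z i \<noteq> of_int k"
    using connected_component_subset complement_avoids assms(3-6) by blast
qed (use assms(2) in simp_all)

lemma region_in_pos_points:
  assumes "1 \<le> m" "x \<in> pos_points n m" "y \<in> region_of n m x"
  shows "y \<in> pos_points n m"
proof -
  have x: "x \<in> shi_complement n m" "x \<in> fund_chamber n"
    and y: "y \<in> shi_complement n m"
    using assms connected_component_subset unfolding pos_points_def by blast+
  have "0 < y j - y i" if "i < j" "j < n" for i j
  proof -
    have "\<not> x j - x i < of_int 0"
      using x(2) that unfolding fund_chamber_def by force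
    moreover have "y j - y i \<noteq> of_int 0"
      using complement_avoids[OF y that, of 0] assms(1) by simp
    ultimately show ?thesis
      using region_side[OF x(1) assms(3) that, of 0] assms(1) by simp
  qed
  then show ?thesis
    using y unfolding pos_points_def fund_chamber_def shi_complement_def by auto
qed

lemma region_same_shifts:
  assumes "x \<in> pos_points n m" "y \<in> region_of n m x"
  shows "same_shifts n m x y"
  unfolding same_shifts_def
proof (intro allI impI)
  fix a b l assume abl: "a < b \<and> b < n \<and> 1 \<le> l \<and> l \<le> m"
  have x: "x \<in> shi_complement n m" and y: "y \<in> shi_complement n m"
    using assms connected_component_subset unfolding pos_points_def by blast+
  have "x b - x a < of_int (int l) \<longleftrightarrow> y b - y a < of_int (int l)"
    using region_side[OF x assms(2), of a b "int l"] abl by auto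
  moreover have "x b - x a \<noteq> of_int (int l)" "y b - y a \<noteq> of_int (int l)"
    using complement_avoids[OF x, of a b "int l"] complement_avoids[OF y, of a b "int l"] abl by auto
  ultimately show "x a + real l < x b \<longleftrightarrow> y a + real l < y b" by auto
qed

text \<open>Conversely, two positive points with the same shift pattern lie on the same side of
  every hyperplane, hence so does the whole segment between them.\<close>

lemma same_shifts_same_side:
  assumes "x \<in> pos_points n m" "y \<in> pos_points n m" "same_shifts n m x y"
    and "i < j" "j < n" "- int m < k" "k \<le> int m"
  shows "x j - x i < of_int k \<longleftrightarrow> y j - y i < of_int k"
proof (cases "k \<le> 0")
  case True
  then have "of_int k \<le> (0::real)"
    by simp
  moreover have "x i < x j" "y i < y j"
    using pos_points_increasing assms(1,2,4,5) by blast+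
  ultimately show ?thesis by linarith
next
  case False
  define l where "l = nat k"
  have l: "k = int l" "1 \<le> l" "l \<le> m"
    using False assms(7) unfolding l_def by auto
  have "x j - x i \<noteq> real l" "y j - y i \<noteq> real l"
    using complement_avoids[of _ n m i j k] assms l unfolding pos_points_def by auto
  moreover have "x i + real l < x j \<longleftrightarrow> y i + real l < y j"
    using same_shiftsD[OF assms(3,4,5)] l by simp
  ultimately show ?thesis using l by auto
qed

lemma convex_comb_less:
  fixes a b c t :: real
  assumes "a < c" "b < c" "0 \<le> t" "t \<le> 1"
  shows "(1 - t) * a + t * b < c"
proof -
  have "(1 - t) * a \<le> (1 - t) * c" "t * b \<le> t * c"
    using assms by (auto intro: mult_left_mono)
  moreover have "(1 - t) * a < (1 - t) * c \<or> t * b < t * c"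
    using assms by (cases "t = 1") auto
  ultimately show ?thesis by (simp add: algebra_simps) linarith
qed

lemma convex_comb_greater:
  fixes a b c t :: real
  assumes "c < a" "c < b" "0 \<le> t" "t \<le> 1"
  shows "c < (1 - t) * a + t * b"
  using convex_comb_less[of "- a" "- c" "- b" t] assms by (simp add: algebra_simps)

lemma segment_in_complement:
  assumes x: "x \<in> pos_points n m" and y: "y \<in> pos_points n m" and xy: "same_shifts n m x y"
    and t: "0 \<le> t" "t \<le> 1"
  shows "(\<lambda>i. (1 - t) * x i + t * y i) \<in> shi_complement n m"
proof -
  define z where "z = (\<lambda>i. (1 - t) * x i + t * y i)"
  have "x \<in> V_A n" "y \<in> V_A n"
    using x y unfolding pos_points_def shi_complement_def by auto
  moreover have "(\<Sum>i<n. z i) = (1 - t) * (\<Sum>i<n. x i) + t * (\<Sum>i<n. y i)"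
    unfolding z_def by (simp add: sum.distrib sum_distrib_left)
  ultimately have "z \<in> V_A n"
    unfolding V_A_def z_def by simp
  moreover have "z j - z i \<noteq> of_int k" if "(i, j, k) \<in> shi_hyps n m" for i j k
  proof -
    have h: "i < j" "j < n" "- int m < k" "k \<le> int m"
      using that unfolding shi_hyps_def by auto
    have diff: "z j - z i = (1 - t) * (x j - x i) + t * (y j - y i)"
      unfolding z_def by (simp add: algebra_simps)
    have "x j - x i \<noteq> of_int k" "y j - y i \<noteq> of_int k"
      using x y h complement_avoids unfolding pos_points_def by blast+
    then consider "x j - x i < of_int k" "y j - y i < of_int k"
      | "of_int k < x j - x i" "of_int k < y j - y i"
      using same_shifts_same_side[OF x y xy h] by fastforce
    then show ?thesis
    proof cases
      case 1
      then show ?thesis using convex_comb_less[OF 1 t] diff by simp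
    next
      case 2
      then show ?thesis using convex_comb_greater[OF 2 t] diff by simp
    qed
  qed
  ultimately show ?thesis
    unfolding shi_complement_def z_def by auto
qed

lemma same_shifts_same_region:
  assumes "x \<in> pos_points n m" "y \<in> pos_points n m" "same_shifts n m x y"
  shows "y \<in> region_of n m x"
proof -
  let ?g = "\<lambda>t::real. \<lambda>i. (1 - t) * x i + t * y i"
  have "continuous_on {0..1} ?g"
    by (intro continuous_intros)
  then have connected: "connected (?g ` {0..1})"
    by (rule connected_continuous_image) simp
  have inside: "?g ` {0..1} \<subseteq> shi_complement n m"
    using segment_in_complement[OF assms] by auto
  have "x \<in> ?g ` {0..1}"
    by (rule image_eqI[where x=0]) auto
  moreover have "y \<in> ?g ` {0..1}"
    by (rule image_eqI[where x=1]) auto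
  ultimately show ?thesis
    using connected_component_maximal[OF _ connected inside] by blast
qed

subsection \<open>The counting sequence of a positive point\<close>

text \<open>For a point x and an index j, the labels (i, l) with i < j and 1 <= l <= m name the
  shifted values x_i + l; the j-th count is how many of them lie below x_j, i.e. how many
  hyperplanes x_j - x_i = l with positive l lie below x.\<close>

definition labels :: "nat \<Rightarrow> nat \<Rightarrow> (nat \<times> nat) set" where
  "labels m j = {..<j} \<times> {1..m}"

definition shifted :: "(nat \<Rightarrow> real) \<Rightarrow> nat \<times> nat \<Rightarrow> real" where
  "shifted x p = x (fst p) + real (snd p)"

definition below_count :: "nat \<Rightarrow> (nat \<Rightarrow> real) \<Rightarrow> nat \<Rightarrow> nat" where
  "below_count m x j = card {p \<in> labels m j. shifted x p < x j}"

definition count_seq :: "nat \<Rightarrow> nat \<Rightarrow> (nat \<Rightarrow> real) \<Rightarrow> nat \<Rightarrow> nat" where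
  "count_seq n m x j = (if j < n then below_count m x j else 0)"

lemma finite_labels [simp]: "finite (labels m j)"
  by (simp add: labels_def)

lemma card_labels: "card (labels m j) = m * j"
  by (simp add: labels_def card_cartesian_product)

lemma below_count_le: "below_count m x j \<le> m * j"
proof -
  have "below_count m x j \<le> card (labels m j)"
    unfolding below_count_def by (intro card_mono) auto
  then show ?thesis by (simp add: card_labels)
qed

lemma below_count_mono:
  assumes "x j < x (Suc j)"
  shows "below_count m x j \<le> below_count m x (Suc j)"
proof -
  have "{p \<in> labels m j. shifted x p < x j} \<subseteq> {p \<in> labels m (Suc j). shifted x p < x (Suc j)}"
    using assms unfolding labels_def by auto
  then show ?thesis
    unfolding below_count_def by (intro card_mono) auto
qed

lemma count_seq_admissible:
  assumes "x \<in> pos_points n m"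
  shows "count_seq n m x \<in> admissible_seqs n m"
  using below_count_le below_count_mono[OF pos_points_increasing[OF assms]]
  unfolding admissible_seqs_def count_seq_def by auto

lemma below_count_same_shifts:
  assumes "same_shifts n m x y" "j < n"
  shows "below_count m x j = below_count m y j"
proof -
  have "{p \<in> labels m j. shifted x p < x j} = {p \<in> labels m j. shifted y p < y j}"
    using assms unfolding same_shifts_def labels_def shifted_def by fastforce
  then show ?thesis
    unfolding below_count_def by simp
qed

lemma count_seq_same_shifts:
  "same_shifts n m x y \<Longrightarrow> count_seq n m x = count_seq n m y"
  using below_count_same_shifts unfolding count_seq_def by fastforce

text \<open>Generic points are those whose coordinates increase and whose differences avoid 1, ..., m.
  For them the relative order of two shifted values x_i' + k' and x_i + k with i, i' < j is
  dictated by the shift pattern below j, as recorded by the following predicate.\<close>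

definition generic :: "nat \<Rightarrow> nat \<Rightarrow> (nat \<Rightarrow> real) \<Rightarrow> bool" where
  "generic n m x \<longleftrightarrow> (\<forall>i j. i < j \<and> j < n \<longrightarrow> x i < x j) \<and>
     (\<forall>i j l. i < j \<and> j < n \<and> 1 \<le> l \<and> l \<le> m \<longrightarrow> x j - x i \<noteq> real l)"

definition label_less :: "(nat \<Rightarrow> nat \<Rightarrow> nat \<Rightarrow> bool) \<Rightarrow> nat \<times> nat \<Rightarrow> nat \<times> nat \<Rightarrow> bool" where
  "label_less P p' p = (case p' of (i', k') \<Rightarrow> case p of (i, k) \<Rightarrow>
     (if i' = i then k' < k
      else if i' < i then k' \<le> k \<or> P i' i (k' - k)
      else k' < k \<and> \<not> P i i' (k - k')))"

lemma pos_points_generic: "x \<in> pos_points n m \<Longrightarrow> generic n m x"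
  using pos_points_increasing complement_avoids[of x n m _ _ "int _"]
  unfolding generic_def pos_points_def by fastforce

lemma shifted_less_iff_label_less:
  assumes gen: "generic n m x" and p: "p \<in> labels m j" "p' \<in> labels m j" and "j \<le> n"
  shows "shifted x p' < shifted x p \<longleftrightarrow> label_less (\<lambda>a b l. x a + real l < x b) p' p"
proof -
  obtain i k i' k' where pk: "p = (i, k)" "p' = (i', k')"
    by (cases p, cases p')
  have r: "i < n" "i' < n" "1 \<le> k" "k \<le> m" "1 \<le> k'" "k' \<le> m"
    using p pk \<open>j \<le> n\<close> by (auto simp: labels_def)
  have inc: "\<And>a b. a < b \<Longrightarrow> b < n \<Longrightarrow> x a < x b"
    and avoid: "\<And>a b l. a < b \<Longrightarrow> b < n \<Longrightarrow> 1 \<le> l \<Longrightarrow> l \<le> m \<Longrightarrow> x b - x a \<noteq> real l"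
    using gen unfolding generic_def by auto
  consider "i' = i" | "i' < i" | "i < i'"
    by linarith
  then show ?thesis
  proof cases
    case 1
    then show ?thesis using pk by (simp add: shifted_def label_less_def)
  next
    case 2
    then have "x i' < x i" using inc r by simp
    then show ?thesis using pk 2
      by (cases "k' \<le> k") (auto simp: shifted_def label_less_def of_nat_diff)
  next
    case 3
    have "x i < x i'" using inc 3 r by simp
    moreover have "x i' - x i \<noteq> real (k - k')" if "k' < k"
      using avoid[OF 3 r(2), of "k - k'"] that r by simp
    ultimately show ?thesis using pk 3
      by (cases "k' < k") (auto simp: shifted_def label_less_def of_nat_diff)
  qed
qed

lemma label_less_same_shifts:
  assumes "same_shifts j m x y" and "p \<in> labels m j" "p' \<in> labels m j"
  shows "label_less (\<lambda>a b l. x a + real l < x b) p' p = label_less (\<lambda>a b l. y a + real l < y b) p' p"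
proof -
  obtain i k i' k' where pk: "p = (i, k)" "p' = (i', k')"
    by (cases p, cases p')
  have r: "i < j" "i' < j" "1 \<le> k" "k \<le> m" "1 \<le> k'" "k' \<le> m"
    using assms(2,3) pk by (auto simp: labels_def)
  have "x i' + real (k' - k) < x i \<longleftrightarrow> y i' + real (k' - k) < y i" if "i' < i" "\<not> k' \<le> k"
    using r that by (intro same_shiftsD[OF assms(1)]) auto
  moreover have "x i + real (k - k') < x i' \<longleftrightarrow> y i + real (k - k') < y i'" if "i < i'" "k' < k"
    using r that by (intro same_shiftsD[OF assms(1)]) auto
  ultimately show ?thesis
    unfolding pk label_less_def by (auto simp del: of_nat_diff)
qed

definition label_rank :: "nat \<Rightarrow> (nat \<Rightarrow> real) \<Rightarrow> nat \<Rightarrow> nat \<times> nat \<Rightarrow> nat" where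
  "label_rank m x j p = card {p' \<in> labels m j. shifted x p' < shifted x p}"

lemma shifted_below_iff_rank:
  assumes gen: "generic n m x" and p: "p \<in> labels m j" and "j < n"
  shows "shifted x p < x j \<longleftrightarrow> label_rank m x j p < below_count m x j"
proof
  assume "shifted x p < x j"
  then have "{p' \<in> labels m j. shifted x p' < shifted x p} \<subset> {p' \<in> labels m j. shifted x p' < x j}"
    using p by auto
  then show "label_rank m x j p < below_count m x j"
    unfolding label_rank_def below_count_def by (intro psubset_card_mono) auto
next
  assume less: "label_rank m x j p < below_count m x j"
  show "shifted x p < x j"
  proof (rule ccontr)
    obtain i k where pk: "p = (i, k)" by (cases p)
    assume "\<not> shifted x p < x j"
    moreover have "x j - x i \<noteq> real k"
      using gen p \<open>j < n\<close> pk unfolding generic_def labels_def by auto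
    ultimately have "x j < shifted x p"
      using pk by (auto simp: shifted_def)
    then have "{p' \<in> labels m j. shifted x p' < x j} \<subseteq> {p' \<in> labels m j. shifted x p' < shifted x p}"
      by auto
    then have "below_count m x j \<le> label_rank m x j p"
      unfolding label_rank_def below_count_def by (intro card_mono) auto
    with less show False by simp
  qed
qed

text \<open>Induction step: the pattern below j and the j-th count determine the pattern below j+1,
  since x_a + l < x_j is decided by the rank of the label (a, l).\<close>

lemma same_shifts_Suc:
  assumes gx: "generic n m x" and gy: "generic n m y" and "j < n"
    and IH: "same_shifts j m x y" and count: "below_count m x j = below_count m y j"
  shows "same_shifts (Suc j) m x y"
  unfolding same_shifts_def
proof (intro allI impI)
  fix a b l assume abl: "a < b \<and> b < Suc j \<and> 1 \<le> l \<and> l \<le> m"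
  show "x a + real l < x b \<longleftrightarrow> y a + real l < y b"
  proof (cases "b < j")
    case True
    then show ?thesis using same_shiftsD[OF IH] abl by simp
  next
    case False
    then have b: "b = j" using abl by simp
    have al: "(a, l) \<in> labels m j" using abl b by (auto simp: labels_def)
    have "{p' \<in> labels m j. shifted x p' < shifted x (a, l)} = {p' \<in> labels m j. shifted y p' < shifted y (a, l)}"
      using shifted_less_iff_label_less[OF gx al] shifted_less_iff_label_less[OF gy al]
        label_less_same_shifts[OF IH al] \<open>j < n\<close> by auto
    then have "label_rank m x j (a, l) = label_rank m y j (a, l)"
      unfolding label_rank_def by simp
    then show ?thesis
      using shifted_below_iff_rank[OF gx al \<open>j < n\<close>] shifted_below_iff_rank[OF gy al \<open>j < n\<close>] count b
      by (simp add: shifted_def)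
  qed
qed

lemma count_seq_determines_shifts:
  assumes "generic n m x" "generic n m y" and "count_seq n m x = count_seq n m y"
  shows "same_shifts n m x y"
proof -
  have "same_shifts j m x y" if "j \<le> n" for j
    using that
  proof (induction j)
    case 0
    then show ?case by (simp add: same_shifts_def)
  next
    case (Suc j)
    have "below_count m x j = below_count m y j"
      using fun_cong[OF assms(3), of j] Suc.prems unfolding count_seq_def by simp
    then show ?case
      using same_shifts_Suc[OF assms(1,2)] Suc by simp
  qed
  then show ?thesis by simp
qed

subsection \<open>Every admissible sequence is a counting sequence\<close>

text \<open>Points are built coordinate by coordinate: x_k is placed just above x_(k-1) at a
  position with the prescribed number of shifted values below it, avoiding all values
  x_i + z (z an integer) so that the point stays generic.  Since only countably many
  values have to be avoided, an uncountable open interval always offers a choice.\<close>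

lemma avoid_integer_translates:
  fixes a b :: real
  assumes "a < b" and "finite F"
  shows "\<exists>s. a < s \<and> s < b \<and> (\<forall>f\<in>F. \<forall>z::int. s - f \<noteq> of_int z)"
proof -
  let ?bad = "(\<lambda>(f, z::int). f + of_int z) ` (F \<times> UNIV)"
  have "countable ?bad"
    using assms(2) by (intro countable_image countable_SIGMA) (auto intro: countable_finite)
  moreover have "uncountable {a<..<b}"
    using assms(1) by (simp add: uncountable_open_interval)
  ultimately obtain s where s: "s \<in> {a<..<b}" "s \<notin> ?bad"
    by (meson countable_subset subsetI)
  have "s - f \<noteq> of_int z" if "f \<in> F" for f z
  proof
    assume "s - f = of_int z"
    then have "s \<in> ?bad" using that by (intro image_eqI[where x="(f, z)"]) auto
    with s show False by simp
  qed
  then show ?thesis using s by auto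
qed

lemma rank_image:
  fixes J :: "'a :: linorder set"
  assumes "finite J"
  shows "(\<lambda>w. card {w' \<in> J. w' < w}) ` J = {..<card J}"
proof -
  let ?rank = "\<lambda>w. card {w' \<in> J. w' < w}"
  have rank_mono: "?rank w1 < ?rank w2" if "w1 \<in> J" "w1 < w2" for w1 w2
    using that assms by (intro psubset_card_mono) auto
  have rank_inj: "inj_on ?rank J"
  proof (rule inj_onI)
    fix w1 w2 assume w: "w1 \<in> J" "w2 \<in> J" "?rank w1 = ?rank w2"
    show "w1 = w2"
      using rank_mono[OF w(1), of w2] rank_mono[OF w(2), of w1] w(3)
      by (cases w1 w2 rule: linorder_cases) auto
  qed
  have rank_range: "?rank ` J \<subseteq> {..<card J}"
  proof
    fix u assume "u \<in> ?rank ` J"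
    then obtain w where w: "w \<in> J" "u = ?rank w" by auto
    then have "{w' \<in> J. w' < w} \<subset> J" by auto
    then show "u \<in> {..<card J}"
      unfolding w using assms by (simp add: psubset_card_mono)
  qed
  show ?thesis
    by (rule card_subset_eq) (use rank_range rank_inj card_image in auto)
qed

lemma threshold_with_count:
  fixes J :: "real set" and a :: real
  assumes J: "finite J" and "a \<notin> J" and v: "card {w \<in> J. w < a} \<le> v" "v \<le> card J"
    and F: "finite F"
  shows "\<exists>s. a < s \<and> card {w \<in> J. w < s} = v \<and> (\<forall>f\<in>F. \<forall>z::int. s - f \<noteq> of_int z)"
proof (cases "v = card J")
  case True
  define M where "M = Max (insert a J)"
  have "a \<le> M" and JM: "\<And>w. w \<in> J \<Longrightarrow> w \<le> M"
    unfolding M_def using J by auto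
  obtain s where s: "M < s" "\<forall>f\<in>F. \<forall>z::int. s - f \<noteq> of_int z"
    using avoid_integer_translates[of M "M + 1" F] F by auto
  have "{w \<in> J. w < s} = J"
    using JM s by force
  then show ?thesis
    using s \<open>a \<le> M\<close> True by (intro exI[of _ s]) auto
next
  case False
  then have "v \<in> (\<lambda>w. card {w' \<in> J. w' < w}) ` J"
    unfolding rank_image[OF J] using v by simp
  then obtain p where p: "p \<in> J" "card {w' \<in> J. w' < p} = v"
    by auto
  have "a < p"
  proof (rule ccontr)
    assume "\<not> a < p"
    then have "p < a" using \<open>a \<notin> J\<close> p by (metis linorder_neqE_linordered_idom)
    then have "card {w' \<in> J. w' < p} < card {w' \<in> J. w' < a}"
      using p J by (intro psubset_card_mono) auto
    then show False using p v by simp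
  qed
  text \<open>Choose s between p and the largest element of J below p.\<close>
  define L where "L = Max (insert a {w \<in> J. w < p})"
  have "L < p" "a \<le> L" and wL: "\<And>w. w \<in> J \<Longrightarrow> w < p \<Longrightarrow> w \<le> L"
    unfolding L_def using J \<open>a < p\<close> by auto
  obtain s where s: "L < s" "s < p" "\<forall>f\<in>F. \<forall>z::int. s - f \<noteq> of_int z"
    using avoid_integer_translates[OF \<open>L < p\<close> F] by auto
  have "{w \<in> J. w < s} = {w \<in> J. w < p}"
    using wL s by force
  then show ?thesis
    using s p \<open>a \<le> L\<close> by (intro exI[of _ s]) auto
qed

definition realises :: "nat \<Rightarrow> nat \<Rightarrow> (nat \<Rightarrow> nat) \<Rightarrow> (nat \<Rightarrow> real) \<Rightarrow> bool" where
  "realises m k e t \<longleftrightarrow> (\<forall>i j. i < j \<and> j < k \<longrightarrow> t i < t j) \<and>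
     (\<forall>i j (z::int). i < j \<and> j < k \<longrightarrow> t j - t i \<noteq> of_int z) \<and> (\<forall>j<k. below_count m t j = e j)"

lemma shifted_inj_on_labels:
  assumes "\<forall>i j (z::int). i < j \<and> j < k \<longrightarrow> t j - t i \<noteq> of_int z"
  shows "inj_on (shifted t) (labels m k)"
proof (rule inj_onI)
  fix p p' assume pp: "p \<in> labels m k" "p' \<in> labels m k" "shifted t p = shifted t p'"
  obtain i l i' l' where p: "p = (i, l)" "p' = (i', l')"
    by (cases p, cases p')
  have "i < k" "i' < k" "t i + real l = t i' + real l'"
    using pp p unfolding labels_def shifted_def by auto
  moreover have "i = i'"
  proof (rule ccontr)
    assume "i \<noteq> i'"
    then consider "i < i'" | "i' < i" by linarith
    then show False
    proof cases
      case 1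
      then have "t i' - t i \<noteq> of_int (int l - int l')"
        using assms \<open>i' < k\<close> by blast
      then show False using calculation by simp
    next
      case 2
      then have "t i - t i' \<noteq> of_int (int l' - int l)"
        using assms \<open>i < k\<close> by blast
      then show False using calculation by simp
    qed
  qed
  ultimately show "p = p'" using p by simp
qed

lemma realises_extend:
  assumes t: "realises m (Suc k) e t" and "t k < s"
    and s_generic: "\<forall>f\<in>t ` {..<Suc k}. \<forall>z::int. s - f \<noteq> of_int z"
    and s_count: "card {p \<in> labels m (Suc k). shifted t p < s} = e (Suc k)"
  shows "realises m (Suc (Suc k)) e (t(Suc k := s))"
proof -
  let ?t = "t(Suc k := s)"
  have inc: "\<forall>i j. i < j \<and> j < Suc k \<longrightarrow> t i < t j"
    and no_int: "\<forall>i j (z::int). i < j \<and> j < Suc k \<longrightarrow> t j - t i \<noteq> of_int z"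
    and counts: "\<forall>j<Suc k. below_count m t j = e j"
    using t unfolding realises_def by auto
  have "t i < s" if "i < Suc k" for i
    using inc \<open>t k < s\<close> that by (metis less_Suc_eq order_less_trans)
  then have "\<forall>i j. i < j \<and> j < Suc (Suc k) \<longrightarrow> ?t i < ?t j"
    using inc by (auto simp: less_Suc_eq)
  moreover have "\<forall>i j (z::int). i < j \<and> j < Suc (Suc k) \<longrightarrow> ?t j - ?t i \<noteq> of_int z"
    using no_int s_generic by (auto simp: less_Suc_eq)
  moreover have "below_count m ?t j = e j" if "j < Suc (Suc k)" for j
  proof (cases "j = Suc k")
    case True
    have "{p \<in> labels m j. shifted ?t p < ?t j} = {p \<in> labels m (Suc k). shifted t p < s}"
      unfolding True labels_def shifted_def by auto
    then show ?thesis
      using True s_count unfolding below_count_def by simp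
  next
    case False
    then have "j < Suc k" using that by simp
    then have "{p \<in> labels m j. shifted ?t p < ?t j} = {p \<in> labels m j. shifted t p < t j}"
      unfolding labels_def shifted_def by auto
    then show ?thesis
      using counts \<open>j < Suc k\<close> unfolding below_count_def by simp
  qed
  ultimately show ?thesis
    unfolding realises_def by blast
qed

lemma realises_Suc:
  assumes t: "realises m (Suc k) e t" and mono: "e k \<le> e (Suc k)" and bound: "e (Suc k) \<le> m * Suc k"
  shows "\<exists>t'. realises m (Suc (Suc k)) e t'"
proof -
  let ?J = "shifted t ` labels m (Suc k)"
  have no_int: "\<forall>i j (z::int). i < j \<and> j < Suc k \<longrightarrow> t j - t i \<noteq> of_int z"
    and count_k: "below_count m t k = e k"
    using t unfolding realises_def by auto
  have inj: "inj_on (shifted t) (labels m (Suc k))"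
    using shifted_inj_on_labels[OF no_int] .
  have count_J: "card {w \<in> ?J. w < s} = card {p \<in> labels m (Suc k). shifted t p < s}" for s
  proof -
    have "{w \<in> ?J. w < s} = shifted t ` {p \<in> labels m (Suc k). shifted t p < s}"
      by auto
    then show ?thesis
      using inj by (simp add: card_image inj_on_subset)
  qed
  have "t k \<notin> ?J"
  proof
    assume "t k \<in> ?J"
    then obtain i l where "i < Suc k" "1 \<le> l" "l \<le> m" "t k = t i + real l"
      unfolding labels_def shifted_def by auto
    moreover have "i \<noteq> k" using calculation by auto
    ultimately show False
      using no_int[rule_format, of i k "int l"] by simp
  qed
  moreover have "card {w \<in> ?J. w < t k} = e k"
  proof -
    have "{p \<in> labels m (Suc k). shifted t p < t k} = {p \<in> labels m k. shifted t p < t k}"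
      unfolding labels_def shifted_def by (auto simp: less_Suc_eq)
    then show ?thesis
      using count_J count_k unfolding below_count_def by simp
  qed
  moreover have "card ?J = m * Suc k"
    using inj by (simp add: card_image card_labels)
  ultimately obtain s where "t k < s" "card {w \<in> ?J. w < s} = e (Suc k)"
      "\<forall>f\<in>t ` {..<Suc k}. \<forall>z::int. s - f \<noteq> of_int z"
    using threshold_with_count[of ?J "t k" "e (Suc k)" "t ` {..<Suc k}"] mono bound by auto
  then have "realises m (Suc (Suc k)) e (t(Suc k := s))"
    using realises_extend[OF t] count_J by simp
  then show ?thesis by blast
qed

lemma admissible_realised:
  assumes e: "e \<in> admissible_seqs n m"
  shows "\<exists>t. realises m n e t"
proof -
  have "\<exists>t. realises m k e t" if "k \<le> n" for k
    using that
  proof (induction k)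
    case 0
    then show ?case by (simp add: realises_def)
  next
    case (Suc k)
    show ?case
    proof (cases k)
      case 0
      have "below_count m (\<lambda>_. 0) 0 = e 0"
        using e Suc.prems unfolding admissible_seqs_def below_count_def labels_def by auto
      then show ?thesis
        using 0 by (intro exI[of _ "\<lambda>_. 0"]) (simp add: realises_def)
    next
      case (Suc k')
      obtain t where "realises m k e t"
        using Suc.IH Suc.prems by auto
      moreover have "e k' \<le> e k"
        using e Suc.prems \<open>k = Suc k'\<close> unfolding admissible_seqs_def by auto
      moreover have "e k \<le> m * k"
        using e Suc.prems unfolding admissible_seqs_def by simp
      ultimately show ?thesis
        using realises_Suc[of m k' e t] \<open>k = Suc k'\<close> by auto
    qed
  qed
  then show ?thesis by simp
qed

lemma admissible_is_count_seq:
  assumes "1 \<le> n" and e: "e \<in> admissible_seqs n m"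
  shows "\<exists>x \<in> pos_points n m. count_seq n m x = e"
proof -
  obtain t where t: "realises m n e t"
    using admissible_realised[OF e] by blast
  define c where "c = (\<Sum>i<n. t i) / real n"
  define x where "x = (\<lambda>i. if i < n then t i - c else 0)"
  have "(\<Sum>i<n. x i) = (\<Sum>i<n. t i) - real n * c"
    unfolding x_def by (simp add: sum_subtractf)
  then have "x \<in> V_A n"
    unfolding V_A_def c_def using assms(1) by (simp add: x_def)
  then have "x \<in> pos_points n m"
    using t unfolding pos_points_def shi_complement_def shi_hyps_def fund_chamber_def
      realises_def x_def by auto
  moreover have "count_seq n m x = e"
  proof
    fix j
    show "count_seq n m x j = e j"
    proof (cases "j < n")
      case True
      have "{p \<in> labels m j. shifted x p < x j} = {p \<in> labels m j. shifted t p < t j}"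
        unfolding x_def labels_def shifted_def using True by auto
      then show ?thesis
        using True t unfolding count_seq_def below_count_def realises_def by simp
    next
      case False
      then show ?thesis
        using e unfolding count_seq_def admissible_seqs_def by auto
    qed
  qed
  ultimately show ?thesis by blast
qed

subsection \<open>Positive regions correspond to admissible sequences\<close>

text \<open>A positive region is the region of a positive point; it is sent to the counting
  sequence of any of its points, which does not depend on the choice.\<close>

definition pos_regions :: "nat \<Rightarrow> nat \<Rightarrow> (nat \<Rightarrow> real) set set" where
  "pos_regions n m = {R \<in> shi_regions n m. R \<subseteq> fund_chamber n}"

definition region_seq :: "nat \<Rightarrow> nat \<Rightarrow> (nat \<Rightarrow> real) set \<Rightarrow> nat \<Rightarrow> nat" where
  "region_seq n m R = count_seq n m (SOME x. x \<in> R)"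

lemma pos_regions_eq:
  assumes "1 \<le> m"
  shows "pos_regions n m = region_of n m ` pos_points n m"
proof
  show "pos_regions n m \<subseteq> region_of n m ` pos_points n m"
  proof
    fix R assume "R \<in> pos_regions n m"
    then obtain x where "x \<in> shi_complement n m" "R = region_of n m x" "R \<subseteq> fund_chamber n"
      unfolding pos_regions_def shi_regions_def by auto
    moreover have "x \<in> R"
      using calculation(1,2) by simp
    ultimately show "R \<in> region_of n m ` pos_points n m"
      unfolding pos_points_def by blast
  qed
  show "region_of n m ` pos_points n m \<subseteq> pos_regions n m"
    using region_in_pos_points[OF assms]
    unfolding pos_regions_def shi_regions_def pos_points_def by blast
qed

lemma region_seq_region_of:
  assumes "x \<in> pos_points n m"
  shows "region_seq n m (region_of n m x) = count_seq n m x"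
proof -
  have "x \<in> region_of n m x"
    using assms unfolding pos_points_def by simp
  then have "(SOME y. y \<in> region_of n m x) \<in> region_of n m x"
    using someI[of "\<lambda>y. y \<in> region_of n m x" x] by blast
  then have "count_seq n m x = count_seq n m (SOME y. y \<in> region_of n m x)"
    by (intro count_seq_same_shifts region_same_shifts[OF assms])
  then show ?thesis
    unfolding region_seq_def by simp
qed

lemma region_seq_image:
  assumes "1 \<le> m"
  shows "region_seq n m ` pos_regions n m = count_seq n m ` pos_points n m"
  unfolding pos_regions_eq[OF assms] image_image
  by (rule image_cong) (simp_all add: region_seq_region_of)

lemma region_seq_bij:
  assumes "1 \<le> m" "1 \<le> n"
  shows "bij_betw (region_seq n m) (pos_regions n m) (admissible_seqs n m)"
  unfolding bij_betw_def
proof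
  show "inj_on (region_seq n m) (pos_regions n m)"
  proof (rule inj_onI)
    fix R1 R2 assume "R1 \<in> pos_regions n m" "R2 \<in> pos_regions n m"
      and eq: "region_seq n m R1 = region_seq n m R2"
    then obtain x y where x: "x \<in> pos_points n m" "R1 = region_of n m x"
      and y: "y \<in> pos_points n m" "R2 = region_of n m y"
      unfolding pos_regions_eq[OF assms(1)] by blast
    have "count_seq n m x = count_seq n m y"
      using eq unfolding x(2) y(2) region_seq_region_of[OF x(1)] region_seq_region_of[OF y(1)] .
    then have "same_shifts n m x y"
      by (intro count_seq_determines_shifts pos_points_generic x(1) y(1))
    then have "y \<in> region_of n m x"
      by (intro same_shifts_same_region x(1) y(1))
    then show "R1 = R2"
      unfolding x(2) y(2) by (rule connected_component_eq[symmetric])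
  qed
  show "region_seq n m ` pos_regions n m = admissible_seqs n m"
    unfolding region_seq_image[OF assms(1)]
    using count_seq_admissible admissible_is_count_seq[OF assms(2)] by blast
qed

subsection \<open>Height and coheight\<close>

text \<open>The fundamental alcove R^0 is nonempty: take equally spaced coordinates of total
  spread below 1, centred to sum zero.\<close>

lemma R0_nonempty:
  assumes "1 \<le> n"
  shows "\<exists>z. z \<in> R0_A n"
proof -
  define z where "z = (\<lambda>i. if i < n then (real i - (real n - 1) / 2) / real n else 0)"
  have gauss: "(\<Sum>i<n. real i) = real n * (real n - 1) / 2"
    by (induction n) (auto simp: algebra_simps)
  have "(\<Sum>i<n. z i) = (\<Sum>i<n. real i / real n - (real n - 1) / 2 / real n)"
    unfolding z_def by (intro sum.cong) (auto simp: diff_divide_distrib)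
  also have "\<dots> = (\<Sum>i<n. real i) / real n - real n * ((real n - 1) / 2 / real n)"
    by (simp add: sum_subtractf sum_divide_distrib)
  also have "\<dots> = 0"
    using assms by (simp add: gauss)
  finally have "(\<Sum>i<n. z i) = 0" .
  moreover have "z j - z i = (real j - real i) / real n" if "i < j" "j < n" for i j
    using that unfolding z_def by (simp add: diff_divide_distrib)
  ultimately have "z \<in> R0_A n"
    unfolding R0_A_def V_A_def z_def by (auto simp: divide_simps)
  then show ?thesis by blast
qed

lemma separates_region_iff:
  assumes "1 \<le> m" and x: "x \<in> pos_points n m" and z: "z \<in> R0_A n"
    and h: "i < j" "j < n" "- int m < k" "k \<le> int m"
  shows "separates (i, j, k) (region_of n m x) (R0_A n) \<longleftrightarrow> 1 \<le> k \<and> x i + of_int k < x j"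
proof
  assume "separates (i, j, k) (region_of n m x) (R0_A n)"
  then obtain y w where y: "y \<in> region_of n m x" and w: "w \<in> R0_A n"
    and sep: "(y j - y i < of_int k \<and> of_int k < w j - w i) \<or> (w j - w i < of_int k \<and> of_int k < y j - y i)"
    unfolding separates_def by auto
  have w_diff: "0 < w j - w i" "w j - w i < 1"
    using w h unfolding R0_A_def by auto
  have "0 < y j - y i"
    using region_in_pos_points[OF assms(1) x y] pos_points_increasing h by force
  then have "(0::real) < of_int k"
    using sep w_diff by linarith
  then have k: "1 \<le> k"
    by simp
  then have "of_int k < y j - y i"
    using sep w_diff by linarith
  moreover have xc: "x \<in> shi_complement n m"
    using x unfolding pos_points_def by simp
  ultimately have "\<not> x j - x i < of_int k"
    using region_side[OF xc y h] by simp
  moreover have "x j - x i \<noteq> of_int k"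
    using complement_avoids[OF xc h] .
  ultimately show "1 \<le> k \<and> x i + of_int k < x j"
    using k by simp
next
  assume k: "1 \<le> k \<and> x i + of_int k < x j"
  then have "(1::real) \<le> of_int k"
    by simp
  moreover have "z j - z i < 1"
    using z h unfolding R0_A_def by auto
  ultimately have "z j - z i < of_int k \<and> of_int k < x j - x i"
    using k by linarith
  moreover have "x \<in> region_of n m x"
    using x unfolding pos_points_def by simp
  ultimately show "separates (i, j, k) (region_of n m x) (R0_A n)"
    unfolding separates_def prod.case using z by blast
qed

lemma separating_hyps_eq:
  assumes "1 \<le> m" "1 \<le> n" and x: "x \<in> pos_points n m"
  shows "{h \<in> shi_hyps n m. separates h (region_of n m x) (R0_A n)} =
     (\<lambda>(j, (i, l)). (i, j, int l)) ` (SIGMA j:{..<n}. {p \<in> labels m j. shifted x p < x j})"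
    (is "?L = ?R")
proof
  obtain z where z: "z \<in> R0_A n"
    using R0_nonempty[OF assms(2)] by blast
  note sep_iff = separates_region_iff[OF assms(1) x z]
  show "?L \<subseteq> ?R"
  proof
    fix h assume "h \<in> ?L"
    then obtain i j k where h: "h = (i, j, k)" "i < j" "j < n" "- int m < k" "k \<le> int m"
      and "separates (i, j, k) (region_of n m x) (R0_A n)"
      unfolding shi_hyps_def by auto
    then have k: "1 \<le> k" "x i + of_int k < x j"
      using sep_iff by auto
    then have "(j, (i, nat k)) \<in> (SIGMA j:{..<n}. {p \<in> labels m j. shifted x p < x j})"
      using h unfolding labels_def shifted_def by auto
    then show "h \<in> ?R"
      using h k by (auto intro!: image_eqI[where x="(j, (i, nat k))"])
  qed
  show "?R \<subseteq> ?L"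
    using sep_iff unfolding labels_def shifted_def shi_hyps_def by auto
qed

lemma height_eq_sum_counts:
  assumes "1 \<le> m" "1 \<le> n" "x \<in> pos_points n m"
  shows "shi_height n m (region_of n m x) = (\<Sum>j<n. below_count m x j)"
proof -
  have "shi_height n m (region_of n m x) = card (SIGMA j:{..<n}. {p \<in> labels m j. shifted x p < x j})"
    unfolding shi_height_def separating_hyps_eq[OF assms]
    by (rule card_image) (auto simp: inj_on_def)
  then show ?thesis
    by (simp add: below_count_def)
qed

lemma num_pos_roots_eq: "num_pos_roots_A n = (\<Sum>j<n. j)"
proof -
  have "{(i, j). i < j \<and> j < n} = (\<lambda>(j, i). (i, j)) ` (SIGMA j:{..<n}. {..<j})"
    by auto
  moreover have "card ((\<lambda>(j, i). (i, j)) ` (SIGMA j:{..<n}. {..<j})) = card (SIGMA j:{..<n}. {..<j})"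
    by (rule card_image) (auto simp: inj_on_def)
  ultimately show ?thesis
    unfolding num_pos_roots_A_def by simp
qed

lemma coh_eq_seq_area:
  assumes "1 \<le> m" "1 \<le> n" "R \<in> pos_regions n m"
  shows "shi_coh n m R = seq_area n m (region_seq n m R)"
proof -
  obtain x where x: "x \<in> pos_points n m" "R = region_of n m x"
    using assms(3) pos_regions_eq[OF assms(1)] by auto
  have "shi_coh n m R = (\<Sum>j<n. m * j) - (\<Sum>j<n. below_count m x j)"
    unfolding shi_coh_def x(2) height_eq_sum_counts[OF assms(1,2) x(1)] num_pos_roots_eq
    by (simp add: sum_distrib_left)
  also have "\<dots> = (\<Sum>j<n. m * j - below_count m x j)"
    by (rule sum_subtractf_nat[symmetric]) (simp add: below_count_le)
  finally show ?thesis
    unfolding seq_area_def x(2) region_seq_region_of[OF x(1)] count_seq_def by simp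
qed

theorem proposition3p10:
  fixes n m :: nat and q :: "'a :: comm_semiring_1"
  assumes "n \<ge> 1" and "m \<ge> 1"
  shows "(\<Sum>R \<in> {R \<in> shi_regions n m. R \<subseteq> fund_chamber n}. q ^ shi_coh n m R)
       = (\<Sum>D \<in> dyck_paths m n. q ^ dyck_area m n D)"
proof -
  have "(\<Sum>R \<in> pos_regions n m. q ^ shi_coh n m R)
      = (\<Sum>R \<in> pos_regions n m. q ^ seq_area n m (region_seq n m R))"
    using coh_eq_seq_area assms by simp
  also have "\<dots> = (\<Sum>e \<in> admissible_seqs n m. q ^ seq_area n m e)"
    using sum.reindex_bij_betw[OF region_seq_bij] assms by simp
  also have "\<dots> = (\<Sum>D \<in> dyck_paths m n. q ^ dyck_area m n D)"
    by (rule dyck_sum_eq_seq_sum[symmetric])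
  finally show ?thesis
    unfolding pos_regions_def .
qed

end
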